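(* Let $n_b\ge1$ be fixed and let $\{P_n\}$ be a density matrix sequence. Assume there is $c>0$ independent of $n$ with $|[P_n]_{ij}|\le c/(|i-j|+1)$ for all $i,j=1,\dots,n$ and all $n$. Then for every $\epsilon>0$ there is a positive integer $\bar m$ independent of $n$ such that $$\frac{\|P_n-P_n^{(m)}\|_F}{\|P_n\|_F}\le\epsilon\quad\text{for all } m\ge\bar m \text{ and all } n.$$
   Context: A density matrix sequence is a sequence $\{P_n\}$ where, for $n=n_bn_e$ with $n_b$ fixed and $n_e\to\infty$, each $P_n$ is an $n\times n$ orthogonal projector ($P_n=P_n^*=P_n^2$) with $\mathrm{Tr}(P_n)=\mathrm{rank}(P_n)=n_e$ (so $\|P_n\|_F=\sqrt{n_e}$). For a matrix $A$ and integer $m\ge0$, $A^{(m)}$ is the $m$-banded truncation: $[A^{(m)}]_{ij}=A_{ij}$ if $|i-j|\le m$ and $0$ otherwise. $\|\cdot\|_F$ is the Frobenius norm. *)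

theory Defs
  imports Complex_Main "Jordan_Normal_Form.Schur_Decomposition" "Jordan_Normal_Form.DL_Rank"
begin

definition band_trunc :: "nat \<Rightarrow> complex mat \<Rightarrow> complex mat" where
  "band_trunc m A = mat (dim_row A) (dim_col A)
     (\<lambda>(i,j). if (if i \<le> j then j - i else i - j) \<le> m then A $$ (i,j) else 0)"

definition mat_trace :: "complex mat \<Rightarrow> complex" where
  "mat_trace A = (\<Sum>i<dim_row A. A $$ (i,i))"

definition frob_norm :: "complex mat \<Rightarrow> real" where
  "frob_norm A = sqrt (\<Sum>i<dim_row A. \<Sum>j<dim_col A. (cmod (A $$ (i,j)))\<^sup>2)"

definition density_matrix_seq :: "nat \<Rightarrow> (nat \<Rightarrow> complex mat) \<Rightarrow> bool" where
  "density_matrix_seq nb P \<longleftrightarrow> (\<forall>ne\<ge>1.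
      P ne \<in> carrier_mat (nb*ne) (nb*ne) \<and>
      mat_adjoint (P ne) = P ne \<and>
      P ne * P ne = P ne \<and>
      mat_trace (P ne) = of_nat ne \<and>
      vec_space.rank (nb*ne) (P ne) = ne)"

end

theory Submission
  imports Defs
begin

(* For an orthogonal projector P the identity P = P * P = P * P^H gives
   P_ii = sum_j |P_ij|^2, hence ||P||_F^2 = Re tr P; for a density matrix of order
   nb*ne this is ne.  Independently of any projector structure, a matrix of order N
   whose entries decay like c/(|i-j|+1) loses little under band truncation: every
   discarded entry lies at distance d > m from the diagonal, so each row contributes
   at most 2 c^2 sum_{d>m} 1/(d+1)^2 <= 2 c^2/(m+1) (telescoping), and
   ||A - A^(m)||_F^2 <= 2 c^2 N/(m+1).  With N = nb*ne the factor ne cancels, so the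
   relative error is at most sqrt(2 nb c^2/(m+1)), uniformly in ne, and it suffices
   to take m beyond 2 nb c^2 / eps^2.
   The file proves: entries of the adjoint, the Frobenius identity for projectors,
   the tail and row-sum estimates, the banded truncation estimate, the relative
   error bound for density matrix sequences, and finally the theorem. *)

lemma frob_norm_nonneg: "frob_norm A \<ge> 0"
  unfolding frob_norm_def by (intro real_sqrt_ge_zero sum_nonneg) auto

lemma frob_norm_sq:
  "(frob_norm A)\<^sup>2 = (\<Sum>i<dim_row A. \<Sum>j<dim_col A. (cmod (A $$ (i,j)))\<^sup>2)"
  unfolding frob_norm_def by (simp add: sum_nonneg)

lemma mat_adjoint_index:
  assumes "P \<in> carrier_mat N N" "i < N" "j < N"
  shows "mat_adjoint P $$ (i,j) = cnj (P $$ (j,i))"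
  using assms unfolding mat_adjoint_def by (simp add: mat_of_rows_def)

lemma projector_diag_entry:
  assumes P: "P \<in> carrier_mat N N" and adj: "mat_adjoint P = P" and idem: "P * P = P"
    and i: "i < N"
  shows "P $$ (i,i) = (\<Sum>j<N. complex_of_real ((cmod (P $$ (i,j)))\<^sup>2))"
proof -
  have "P $$ (i,i) = (P * P) $$ (i,i)" using idem by simp
  also have "\<dots> = (\<Sum>j<N. P $$ (i,j) * P $$ (j,i))"
    using P i by (simp add: scalar_prod_def lessThan_atLeast0)
  also have "\<dots> = (\<Sum>j<N. complex_of_real ((cmod (P $$ (i,j)))\<^sup>2))"
  proof (rule sum.cong[OF refl])
    fix j assume "j \<in> {..<N}"
    then have "P $$ (j,i) = cnj (P $$ (i,j))"
      using mat_adjoint_index[OF P, of j i] adj i by simp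
    then show "P $$ (i,j) * P $$ (j,i) = complex_of_real ((cmod (P $$ (i,j)))\<^sup>2)"
      by (simp only: complex_norm_square)
  qed
  finally show ?thesis .
qed

lemma frob_norm_sq_projector:
  assumes P: "P \<in> carrier_mat N N" and "mat_adjoint P = P" and "P * P = P"
  shows "(frob_norm P)\<^sup>2 = Re (mat_trace P)"
  using P projector_diag_entry[OF assms]
  by (simp add: frob_norm_sq mat_trace_def Re_sum)

text \<open>Telescoping with 1/(d+1)^2 \<le> 1/d - 1/(d+1) bounds the tail of the squared
  decay profile beyond distance m.\<close>

lemma tail_sum: "(\<Sum>d\<in>{m<..<N}. 1/(real d+1)^2) \<le> 1/(real m+1) - 1/real (max N (m+1))"
proof (induction N)
  case 0
  then show ?case by (simp add: add.commute)
next
  case (Suc N)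
  show ?case
  proof (cases "N \<le> m")
    case True
    then have "{m<..<Suc N} = {}" by auto
    with True show ?thesis by (simp add: add.commute)
  next
    case False
    then have "{m<..<Suc N} = insert N {m<..<N}" by auto
    then have split: "(\<Sum>d\<in>{m<..<Suc N}. 1/(real d+1)^2)
                      = 1/(real N+1)^2 + (\<Sum>d\<in>{m<..<N}. 1/(real d+1)^2)" by simp
    have maxs: "real (max N (m+1)) = real N" "real (max (Suc N) (m+1)) = real N + 1"
      using False by auto
    have N1: "real N \<ge> 1" using False by simp
    have "1/(real N+1)^2 \<le> 1/(real N*(real N+1))"
      using N1 by (intro divide_left_mono) (auto simp: power2_eq_square)
    also have "\<dots> = 1/real N - 1/(real N + 1)"
      using N1 by (simp add: field_simps)
    finally have step: "1/(real N+1)^2 \<le> 1/real N - 1/(real N + 1)" .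
    show ?thesis using Suc.IH step unfolding split maxs by linarith
  qed
qed

definition idx_dist :: "nat \<Rightarrow> nat \<Rightarrow> nat" where
  "idx_dist i j = (if i \<le> j then j - i else i - j)"

lemma real_idx_dist: "real (idx_dist i j) = \<bar>real i - real j\<bar>"
  unfolding idx_dist_def by auto

text \<open>In one row, the indices at distance greater than m from the diagonal lie on
  two sides, each contributing at most the tail sum, hence at most 1/(m+1).\<close>

lemma off_band_row_sum:
  assumes iN: "i < N"
  shows "(\<Sum>j<N. if m < idx_dist i j then 1/(real (idx_dist i j)+1)^2 else 0) \<le> 2/(real m+1)"
    (is "?L \<le> _")
proof -
  define g where "g = (\<lambda>d::nat. 1/(real d+1)^2)"
  have g_nonneg: "\<And>d. g d \<ge> 0" unfolding g_def by simp
  define right where "right = {j\<in>{..<N}. i \<le> j \<and> m < j - i}"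
  define left where "left = {j\<in>{..<N}. \<not> i \<le> j \<and> m < i - j}"
  have "?L = (\<Sum>j<N. (if j \<in> right then g (j - i) else 0) + (if j \<in> left then g (i - j) else 0))"
    by (rule sum.cong) (auto simp: right_def left_def g_def idx_dist_def)
  also have "\<dots> = (\<Sum>j\<in>right. g (j - i)) + (\<Sum>j\<in>left. g (i - j))"
    by (simp add: sum.distrib sum.If_cases right_def left_def Int_def)
  finally have L: "?L = (\<Sum>j\<in>right. g (j - i)) + (\<Sum>j\<in>left. g (i - j))" .
  have "(\<Sum>j\<in>right. g (j - i)) = (\<Sum>d\<in>(\<lambda>j. j - i) ` right. g d)"
    by (rule sum.reindex[symmetric, unfolded o_def]) (auto simp: inj_on_def right_def)
  also have "\<dots> \<le> (\<Sum>d\<in>{m<..<N}. g d)"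
    by (rule sum_mono2) (auto simp: right_def g_nonneg)
  finally have R: "(\<Sum>j\<in>right. g (j - i)) \<le> (\<Sum>d\<in>{m<..<N}. g d)" .
  have "(\<Sum>j\<in>left. g (i - j)) = (\<Sum>d\<in>(\<lambda>j. i - j) ` left. g d)"
    by (rule sum.reindex[symmetric, unfolded o_def]) (use iN in \<open>auto simp: inj_on_def left_def\<close>)
  also have "\<dots> \<le> (\<Sum>d\<in>{m<..<N}. g d)"
    by (rule sum_mono2) (use iN in \<open>auto simp: left_def g_nonneg\<close>)
  finally have Lft: "(\<Sum>j\<in>left. g (i - j)) \<le> (\<Sum>d\<in>{m<..<N}. g d)" .
  have "(\<Sum>d\<in>{m<..<N}. g d) \<le> 1/(real m+1)"
    using tail_sum[of m N] unfolding g_def by (smt (verit) of_nat_0_le_iff divide_nonneg_nonneg)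
  then show ?thesis using L R Lft by linarith
qed

lemma band_trunc_residual_index:
  assumes "A \<in> carrier_mat N N" "i < N" "j < N"
  shows "(A - band_trunc m A) $$ (i,j) = (if m < idx_dist i j then A $$ (i,j) else 0)"
  using assms unfolding band_trunc_def idx_dist_def by auto

lemma band_trunc_error_sq:
  assumes A: "A \<in> carrier_mat N N"
    and decay: "\<And>i j. i < N \<Longrightarrow> j < N \<Longrightarrow> cmod (A $$ (i,j)) \<le> c / (\<bar>real i - real j\<bar> + 1)"
  shows "(frob_norm (A - band_trunc m A))\<^sup>2 \<le> 2 * c^2 * real N / (real m + 1)"
proof -
  define w where "w = (\<lambda>i j. if m < idx_dist i j then 1/(real (idx_dist i j)+1)^2 else 0)"
  have entry: "(cmod ((A - band_trunc m A) $$ (i,j)))\<^sup>2 \<le> c^2 * w i j"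
    if ij: "i < N" "j < N" for i j
  proof (cases "m < idx_dist i j")
    case True
    have "cmod (A $$ (i,j)) \<le> c / (real (idx_dist i j) + 1)"
      using decay[OF ij] by (simp add: real_idx_dist)
    then have "(cmod (A $$ (i,j)))\<^sup>2 \<le> (c / (real (idx_dist i j) + 1))\<^sup>2"
      by (intro power_mono) auto
    then show ?thesis
      using True band_trunc_residual_index[OF A ij] by (simp add: w_def power_divide)
  qed (simp add: band_trunc_residual_index[OF A ij] w_def)
  have "(frob_norm (A - band_trunc m A))\<^sup>2
        = (\<Sum>i<N. \<Sum>j<N. (cmod ((A - band_trunc m A) $$ (i,j)))\<^sup>2)"
    using A by (simp add: frob_norm_sq band_trunc_def)
  also have "\<dots> \<le> (\<Sum>i<N. c^2 * (\<Sum>j<N. w i j))"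
    by (simp add: sum_distrib_left) (intro sum_mono entry; simp)
  also have "\<dots> \<le> (\<Sum>i<N. c^2 * (2/(real m+1)))"
    by (intro sum_mono mult_left_mono) (auto simp: w_def off_band_row_sum)
  also have "\<dots> = 2 * c^2 * real N / (real m + 1)" by simp
  finally show ?thesis .
qed

lemma density_matrix_frob_norm:
  assumes "density_matrix_seq nb P" "ne \<ge> 1"
  shows "frob_norm (P ne) = sqrt (real ne)"
proof -
  have "P ne \<in> carrier_mat (nb*ne) (nb*ne)" "mat_adjoint (P ne) = P ne"
    "P ne * P ne = P ne" "mat_trace (P ne) = of_nat ne"
    using assms unfolding density_matrix_seq_def by auto
  then have "(frob_norm (P ne))\<^sup>2 = real ne" using frob_norm_sq_projector by simp
  then show ?thesis using frob_norm_nonneg[of "P ne"] by (metis real_sqrt_abs abs_of_nonneg)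
qed

text \<open>Since ||P||_F^2 = ne while the residual grows like nb*ne, the relative error
  is bounded independently of ne.\<close>

lemma density_matrix_band_error:
  assumes dms: "density_matrix_seq nb P" and ne: "ne \<ge> 1"
    and decay: "\<And>i j. i < nb*ne \<Longrightarrow> j < nb*ne \<Longrightarrow>
                   cmod (P ne $$ (i,j)) \<le> c / (\<bar>real i - real j\<bar> + 1)"
  shows "frob_norm (P ne - band_trunc m (P ne)) / frob_norm (P ne)
           \<le> sqrt (2 * real nb * c^2 / (real m + 1))"
proof -
  define R where "R = frob_norm (P ne - band_trunc m (P ne))"
  have "P ne \<in> carrier_mat (nb*ne) (nb*ne)"
    using dms ne unfolding density_matrix_seq_def by auto
  then have R2: "R\<^sup>2 \<le> 2 * c^2 * real (nb*ne) / (real m + 1)"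
    unfolding R_def by (rule band_trunc_error_sq[OF _ decay])
  have ne_pos: "real ne > 0" using ne by simp
  have "R / frob_norm (P ne) = sqrt (R\<^sup>2 / real ne)"
    using frob_norm_nonneg[of "P ne - band_trunc m (P ne)"]
    by (simp add: R_def density_matrix_frob_norm[OF dms ne] real_sqrt_divide)
  also have "\<dots> \<le> sqrt (2 * c^2 * real (nb*ne) / (real m + 1) / real ne)"
    using R2 ne_pos by (intro real_sqrt_le_mono divide_right_mono) auto
  also have "\<dots> = sqrt (2 * real nb * c^2 / (real m + 1))"
    using ne_pos by (simp add: divide_divide_eq_left mult.commute mult.left_commute)
  finally show ?thesis unfolding R_def .
qed

theorem theorem7p3:
  fixes nb :: nat and P :: "nat \<Rightarrow> complex mat" and c :: real
  assumes "nb \<ge> 1"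
    and "density_matrix_seq nb P"
    and "c > 0"
    and "\<forall>ne\<ge>1. \<forall>i<nb*ne. \<forall>j<nb*ne.
           cmod (P ne $$ (i,j)) \<le> c / (\<bar>real i - real j\<bar> + 1)"
  shows "\<forall>\<epsilon>>0. \<exists>mbar::nat. mbar > 0 \<and>
           (\<forall>m\<ge>mbar. \<forall>ne\<ge>1.
              frob_norm (P ne - band_trunc m (P ne)) / frob_norm (P ne) \<le> \<epsilon>)"
proof (intro allI impI)
  fix \<epsilon> :: real assume eps: "\<epsilon> > 0"
  define K where "K = 2 * real nb * c^2"
  define mbar where "mbar = nat \<lceil>K / \<epsilon>^2\<rceil> + 1"
  have "sqrt (K / (real m + 1)) \<le> \<epsilon>" if "m \<ge> mbar" for m
  proof -
    have "K / \<epsilon>^2 \<le> real m + 1" using that unfolding mbar_def by linarith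
    then have "K / (real m + 1) \<le> \<epsilon>^2" using eps by (simp add: field_simps)
    then show ?thesis using eps real_sqrt_le_mono by fastforce
  qed
  then have "\<forall>m\<ge>mbar. \<forall>ne\<ge>1.
               frob_norm (P ne - band_trunc m (P ne)) / frob_norm (P ne) \<le> \<epsilon>"
    using density_matrix_band_error[OF assms(2)] assms(4) unfolding K_def
    by (meson order_trans)
  then show "\<exists>mbar::nat. mbar > 0 \<and> (\<forall>m\<ge>mbar. \<forall>ne\<ge>1.
               frob_norm (P ne - band_trunc m (P ne)) / frob_norm (P ne) \<le> \<epsilon>)"
    unfolding mbar_def by auto
qed

end
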